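(* Let $n\ge1$, $m=\lfloor n/2\rfloor$, $\rho\in(0,1)$, $j\in\mathbb Z$, and let $k\le l$ be integers. If $Z^{j}_m[l]_n\le Z^{\rho,1}_m[k]_n$, then $$L_j[l]_n-L_j[k]_n\le L^{\rho,1}_m[l]_n-L^{\rho,1}_m[k]_n.$$ If $Z^{\rho,1}_m[l]_n\le Z^{j}_m[k]_n$, then $$L^{\rho,1}_m[l]_n-L^{\rho,1}_m[k]_n\le L_j[l]_n-L_j[k]_n.$$
   Context: Let $\omega=\{\omega_{i,j}:(i,j)\in\mathbb Z^2,\ i+j>0\}$ be i.i.d. exponential random variables with parameter $1$. Write $(i,j)\le(k,l)$ if $i\le k$ and $j\le l$. An up-right path from $\mathbf x$ to $\mathbf y$ is a sequence $\mathbf x=\mathbf x_0,\dots,\mathbf x_m=\mathbf y$ with increments in $\{(1,0),(0,1)\}$; its passage time is $\sum_{i=1}^m\omega_{\mathbf x_i}$ (starting point excluded). For $\mathbf x=(i,j)\le\mathbf y$ with $i+j\ge0$, $L(\mathbf x,\mathbf y)$ is the maximal passage time over up-right paths, and the geodesic from $\mathbf x$ to $\mathbf y$ is the (a.s. unique) path attaining it. For integer $k$, $[k]_n:=(n+k,n-k)$ and $L_k(\mathbf x):=L([k]_0,\mathbf x)$. For $\rho\in(0,1)$, let $\mathrm s^1_\rho$ be a stationary profile independent of $\omega$: $\mathrm s^1_\rho(0)=0$, $\mathrm s^1_\rho(k)=\sum_{i=1}^k\zeta_i$ ($k>0$), $\mathrm s^1_\rho(k)=-\sum_{i=k+1}^0\zeta_i$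 ($k<0$), with $\zeta_i$ i.i.d. copies of $E_1-E_2$, $E_1,E_2$ independent exponentials of rates $1-\rho$ and $\rho$. Define $L^{\rho,1}_m[k]_n:=\max\{\mathrm s^1_\rho(i)+L([i]_m,[k]_n): i\in\mathbb Z,\ [i]_m\le[k]_n\}$ and let $Z^{\rho,1}_m[k]_n$ be the largest maximizing $i$. For $j$ with $[j]_0\le[k]_n$, let $Z^j_m[k]_n$ be the integer $z$ such that $[z]_m$ is the point where the geodesic from $[j]_0$ to $[k]_n$ meets the anti-diagonal $\{(m+i,m-i):i\in\mathbb Z\}$. *)

theory Defs
  imports "HOL-Probability.Probability"
begin

(* [k]_n = (n+k, n-k) *)
definition pt :: "int \<Rightarrow> int \<Rightarrow> int \<times> int" where
  "pt k n = (n + k, n - k)"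

definition ple :: "int \<times> int \<Rightarrow> int \<times> int \<Rightarrow> bool" where
  "ple x y \<longleftrightarrow> fst x \<le> fst y \<and> snd x \<le> snd y"

definition is_path :: "int \<times> int \<Rightarrow> int \<times> int \<Rightarrow> (int \<times> int) list \<Rightarrow> bool" where
  "is_path x y xs \<longleftrightarrow> xs \<noteq> [] \<and> hd xs = x \<and> last xs = y \<and>
     (\<forall>i. Suc i < length xs \<longrightarrow>
        (xs ! Suc i = (fst (xs ! i) + 1, snd (xs ! i)) \<or>
         xs ! Suc i = (fst (xs ! i), snd (xs ! i) + 1)))"

(* passage time: starting point excluded *)
definition weight :: "(int \<times> int \<Rightarrow> real) \<Rightarrow> (int \<times> int) list \<Rightarrow> real" where
  "weight w xs = sum_list (map w (tl xs))"

definition LPP :: "(int \<times> int \<Rightarrow> real) \<Rightarrow> int \<times> int \<Rightarrow> int \<times> int \<Rightarrow> real" where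
  "LPP w x y = Max {weight w xs | xs. is_path x y xs}"

(* the geodesic (a maximizing path; a.s. unique) *)
definition geod :: "(int \<times> int \<Rightarrow> real) \<Rightarrow> int \<times> int \<Rightarrow> int \<times> int \<Rightarrow> (int \<times> int) list" where
  "geod w x y = (SOME xs. is_path x y xs \<and> weight w xs = LPP w x y)"

definition Lj :: "(int \<times> int \<Rightarrow> real) \<Rightarrow> int \<Rightarrow> int \<times> int \<Rightarrow> real" where
  "Lj w j x = LPP w (pt j 0) x"

(* Z^j_m[k]_n: where the geodesic from [j]_0 to [k]_n meets the anti-diagonal of level m *)
definition Zgeo :: "(int \<times> int \<Rightarrow> real) \<Rightarrow> int \<Rightarrow> int \<Rightarrow> int \<Rightarrow> int \<Rightarrow> int" where
  "Zgeo w j m k n = (THE z. pt z m \<in> set (geod w (pt j 0) (pt k n)))"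

(* stationary profile s^1_rho built from increments zeta *)
definition profile :: "(int \<Rightarrow> real) \<Rightarrow> int \<Rightarrow> real" where
  "profile z k = (if 0 \<le> k then (\<Sum>i\<in>{1..k}. z i) else - (\<Sum>i\<in>{k+1..0}. z i))"

definition Lrho :: "(int \<times> int \<Rightarrow> real) \<Rightarrow> (int \<Rightarrow> real) \<Rightarrow> int \<Rightarrow> int \<Rightarrow> int \<Rightarrow> real" where
  "Lrho w s m k n = Max {s i + LPP w (pt i m) (pt k n) | i. ple (pt i m) (pt k n)}"

definition Zrho :: "(int \<times> int \<Rightarrow> real) \<Rightarrow> (int \<Rightarrow> real) \<Rightarrow> int \<Rightarrow> int \<Rightarrow> int \<Rightarrow> int" where
  "Zrho w s m k n = Max {i. ple (pt i m) (pt k n) \<and> s i + LPP w (pt i m) (pt k n) = Lrho w s m k n}"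

end

theory Submission
  imports Defs
begin

text \<open>Take the geodesic from \<open>x = [j]\<^sub>0\<close> to one endpoint \<open>y\<close>, and a maximizing path for the
stationary problem from its exit point \<open>u\<close> on the anti-diagonal of level \<open>m\<close> to the other
endpoint \<open>v\<close>. The hypothesis on the exit points says that the two paths, seen from level \<open>m\<close> on,
start and end in opposite order, so they share a point \<open>c\<close>. Swapping their pieces after \<open>c\<close>
gives \<open>L(x,y) + L(u,v) \<le> L(x,v) + L(u,y)\<close>; adding the profile value at \<open>u\<close>, and using that
\<open>u\<close> is optimal for \<open>v\<close> but merely admissible for \<open>y\<close>, this rearranges to the comparison of
increments.\<close>

definition up_right_step :: "int \<times> int \<Rightarrow> int \<times> int \<Rightarrow> bool" where
  "up_right_step a b \<longleftrightarrow> b = (fst a + 1, snd a) \<or> b = (fst a, snd a + 1)"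

definition level :: "int \<times> int \<Rightarrow> int" where
  "level p = fst p + snd p"

definition offset :: "int \<times> int \<Rightarrow> int" where
  "offset p = fst p - snd p"

lemma level_pt [simp]: "level (pt z m) = 2 * m"
  and offset_pt [simp]: "offset (pt z m) = 2 * z"
  by (simp_all add: level_def offset_def pt_def)

lemma ple_trans: "ple x y \<Longrightarrow> ple y z \<Longrightarrow> ple x z"
  by (auto simp: ple_def)

subsection \<open>Up-right paths\<close>

lemma is_path_singleton: "is_path x y [p] \<longleftrightarrow> p = x \<and> x = y"
  by (auto simp: is_path_def)

lemma is_path_Cons_Cons:
  "is_path x y (p # q # xs) \<longleftrightarrow> p = x \<and> up_right_step x q \<and> is_path q y (q # xs)"
proof
  assume H: "is_path x y (p # q # xs)"
  then have "p = x" by (simp add: is_path_def)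
  moreover have "up_right_step x q" using H \<open>p = x\<close> unfolding is_path_def up_right_step_def
    by (metis One_nat_def Suc_less_eq length_Cons nth_Cons_0 nth_Cons_Suc zero_less_Suc)
  moreover have "is_path q y (q # xs)" using H unfolding is_path_def
    by simp (metis Suc_less_eq length_Cons nth_Cons_Suc)
  ultimately show "p = x \<and> up_right_step x q \<and> is_path q y (q # xs)" by simp
next
  assume H: "p = x \<and> up_right_step x q \<and> is_path q y (q # xs)"
  show "is_path x y (p # q # xs)" unfolding is_path_def
  proof (intro conjI allI impI)
    fix i assume i: "Suc i < length (p # q # xs)"
    show "(p # q # xs) ! Suc i = (fst ((p # q # xs) ! i) + 1, snd ((p # q # xs) ! i)) \<or>
          (p # q # xs) ! Suc i = (fst ((p # q # xs) ! i), snd ((p # q # xs) ! i) + 1)"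
    proof (cases i)
      case 0 then show ?thesis using H by (simp add: up_right_step_def)
    next
      case (Suc i') then show ?thesis using H i unfolding is_path_def
        by (metis Suc_less_eq length_Cons nth_Cons_Suc)
    qed
  qed (use H in \<open>auto simp: is_path_def\<close>)
qed

lemma is_path_Cons:
  "is_path x y (p # xs) \<longleftrightarrow>
     p = x \<and> (if xs = [] then x = y else up_right_step x (hd xs) \<and> is_path (hd xs) y xs)"
  by (cases xs) (auto simp: is_path_singleton is_path_Cons_Cons)

lemma is_path_nonempty: "is_path x y xs \<Longrightarrow> xs \<noteq> []"
  and is_path_hd: "is_path x y xs \<Longrightarrow> hd xs = x"
  by (simp_all add: is_path_def)

lemma is_path_append:
  "is_path x c xs \<Longrightarrow> is_path c y ys \<Longrightarrow> is_path x y (xs @ tl ys)"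
proof (induction xs arbitrary: x)
  case Nil then show ?case by (simp add: is_path_def)
next
  case (Cons p xs)
  show ?case
  proof (cases "xs = []")
    case True
    then have "x = c" using Cons.prems by (simp add: is_path_Cons)
    moreover have "ys = c # tl ys" using Cons.prems(2)
      by (metis is_path_hd is_path_nonempty list.exhaust_sel)
    ultimately show ?thesis using True Cons.prems by (simp add: is_path_Cons)
  next
    case False
    with Cons.prems have "p = x" "up_right_step x (hd xs)" "is_path (hd xs) c xs"
      by (auto simp: is_path_Cons)
    with Cons.IH[OF _ Cons.prems(2)] False show ?thesis by (simp add: is_path_Cons)
  qed
qed

lemma weight_append: "xs \<noteq> [] \<Longrightarrow> weight w (xs @ tl ys) = weight w xs + weight w ys"
  by (simp add: weight_def)

lemma is_path_split:
  "is_path x y xs \<Longrightarrow> c \<in> set xs \<Longrightarrow> \<exists>as bs. is_path x c as \<and> is_path c y bs \<and> xs = as @ tl bs"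
proof (induction xs arbitrary: x)
  case Nil then show ?case by simp
next
  case (Cons p xs)
  show ?case
  proof (cases "c = p")
    case True
    then show ?thesis using Cons.prems
      by (intro exI[of _ "[p]"] exI[of _ "p # xs"]) (auto simp: is_path_Cons)
  next
    case False
    then have c: "c \<in> set xs" using Cons.prems by simp
    then have "xs \<noteq> []" by auto
    then have h: "p = x" "up_right_step x (hd xs)" "is_path (hd xs) y xs"
      using Cons.prems by (auto simp: is_path_Cons)
    obtain as bs where ab: "is_path (hd xs) c as" "is_path c y bs" "xs = as @ tl bs"
      using Cons.IH[OF h(3) c] by blast
    have "as \<noteq> []" "hd as = hd xs" using ab(1) by (auto simp: is_path_def)
    with h(1,2) ab(1) have "is_path x c (p # as)" by (simp add: is_path_Cons)
    then show ?thesis using ab h by (intro exI[of _ "p # as"] exI[of _ bs]) simp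
  qed
qed

lemma is_path_suffix:
  assumes "is_path x y xs" "c \<in> set xs"
  obtains bs where "is_path c y bs" "set bs \<subseteq> set xs"
proof -
  obtain as bs where "is_path c y bs" "xs = as @ tl bs"
    using is_path_split[OF assms] by blast
  moreover have "set bs = insert c (set (tl bs))"
    using \<open>is_path c y bs\<close> by (metis is_path_hd is_path_nonempty list.exhaust_sel list.simps(15))
  ultimately show ?thesis using assms(2) that by auto
qed

lemma is_path_level_nth:
  "is_path x y xs \<Longrightarrow> i < length xs \<Longrightarrow> level (xs ! i) = level x + int i"
proof (induction xs arbitrary: x i)
  case Nil then show ?case by simp
next
  case (Cons p xs)
  show ?case
  proof (cases i)
    case 0 then show ?thesis using Cons.prems by (simp add: is_path_Cons)
  next
    case (Suc i')
    with Cons.prems have "xs \<noteq> []" by auto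
    with Cons.prems have h: "up_right_step x (hd xs)" "is_path (hd xs) y xs"
      by (auto simp: is_path_Cons)
    have "level (xs ! i') = level (hd xs) + int i'" using Cons.IH[OF h(2)] Suc Cons.prems by simp
    moreover have "level (hd xs) = level x + 1" using h(1) by (auto simp: up_right_step_def level_def)
    ultimately show ?thesis using Suc by simp
  qed
qed

lemma is_path_level_last: "is_path x y xs \<Longrightarrow> level y = level x + int (length xs - 1)"
proof -
  assume P: "is_path x y xs"
  then have "xs \<noteq> []" "y = xs ! (length xs - 1)" by (auto simp: is_path_def last_conv_nth)
  then show ?thesis using is_path_level_nth[OF P, of "length xs - 1"] by simp
qed

lemma is_path_ple: "is_path x y xs \<Longrightarrow> ple x y \<and> (\<forall>p\<in>set xs. ple x p \<and> ple p y)"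
proof (induction xs arbitrary: x)
  case Nil then show ?case by (simp add: is_path_def)
next
  case (Cons p xs)
  show ?case
  proof (cases "xs = []")
    case True then show ?thesis using Cons.prems by (auto simp: is_path_Cons ple_def)
  next
    case False
    with Cons.prems have h: "p = x" "up_right_step x (hd xs)" "is_path (hd xs) y xs"
      by (auto simp: is_path_Cons)
    have "ple x (hd xs)" using h(2) by (auto simp: up_right_step_def ple_def)
    then show ?thesis using Cons.IH[OF h(3)] h(1) by (auto simp: ple_def)
  qed
qed

lemma is_path_exists: "ple x y \<Longrightarrow> \<exists>xs. is_path x y xs"
proof (induction "nat (level y - level x)" arbitrary: x)
  case 0
  then have "x = y" by (auto simp: ple_def level_def prod_eq_iff)
  then show ?case by (metis is_path_singleton)
next
  case (Suc N)
  define q where "q = (if fst x < fst y then (fst x + 1, snd x) else (fst x, snd x + 1))"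
  have "ple q y" "N = nat (level y - level q)"
    using Suc.prems Suc.hyps(2) by (auto simp: q_def ple_def level_def)
  then obtain qs where "is_path q y qs" using Suc.hyps(1) by blast
  moreover have "qs \<noteq> []" "hd qs = q" using calculation by (auto simp: is_path_def)
  ultimately have "is_path x y (x # qs)" by (simp add: is_path_Cons up_right_step_def q_def)
  then show ?case ..
qed

lemma finite_paths: "finite {xs. is_path x y xs}"
proof (rule finite_subset)
  let ?B = "{fst x..fst y} \<times> {snd x..snd y}"
  let ?N = "nat (level y - level x) + 1"
  show "{xs. is_path x y xs} \<subseteq> {xs. set xs \<subseteq> ?B \<and> length xs = ?N}"
  proof
    fix xs assume "xs \<in> {xs. is_path x y xs}"
    then have P: "is_path x y xs" by simp
    have "set xs \<subseteq> ?B" using is_path_ple[OF P] by (auto simp: ple_def)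
    moreover have "length xs = ?N"
      using is_path_level_last[OF P] is_path_nonempty[OF P] by (cases xs) auto
    ultimately show "xs \<in> {xs. set xs \<subseteq> ?B \<and> length xs = ?N}" by simp
  qed
  show "finite {xs. set xs \<subseteq> ?B \<and> length xs = ?N}"
    by (rule finite_lists_length_eq) simp
qed

text \<open>On paths started at a common level the offsets change by \<open>\<plusminus>1\<close> per step, so their
difference stays even and cannot change sign without vanishing.\<close>

lemma up_right_paths_cross:
  "is_path a b xs \<Longrightarrow> is_path a' b' ys \<Longrightarrow> level a = level a' \<Longrightarrow> level b = level b' \<Longrightarrow>
   offset a \<le> offset a' \<Longrightarrow> offset b' \<le> offset b \<Longrightarrow> \<exists>c\<in>set xs. c \<in> set ys"
proof (induction xs arbitrary: a a' ys)
  case Nil then show ?case by (simp add: is_path_def)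
next
  case (Cons p xs)
  obtain q' ys' where ys: "ys = q' # ys'" using is_path_nonempty[OF Cons.prems(2)] by (cases ys) auto
  have "p = a" "q' = a'" using Cons.prems(1,2) ys by (simp_all add: is_path_Cons)
  show ?case
  proof (cases "offset a = offset a'")
    case True
    then have "a = a'" using Cons.prems(3) by (auto simp: level_def offset_def prod_eq_iff)
    then show ?thesis using \<open>p = a\<close> \<open>q' = a'\<close> ys by (intro bexI[of _ a]) simp_all
  next
    case False
    have "offset a' - offset a = 2 * (snd a - snd a')"
      using Cons.prems(3) by (simp add: level_def offset_def)
    then have gap: "offset a + 2 \<le> offset a'" using False Cons.prems(5) by presburger
    have len: "length xs = length ys'"
      using is_path_level_last[OF Cons.prems(1)] is_path_level_last[OF Cons.prems(2)]
        Cons.prems(3,4) ys by simp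
    show ?thesis
    proof (cases "xs = []")
      case True
      then have "b = a" "b' = a'" using len Cons.prems(1,2) ys by (simp_all add: is_path_Cons)
      then show ?thesis using Cons.prems(6) gap by simp
    next
      case False
      with len have "ys' \<noteq> []" by auto
      with False Cons.prems(1,2) ys have h: "up_right_step a (hd xs)" "is_path (hd xs) b xs"
        and h': "up_right_step a' (hd ys')" "is_path (hd ys') b' ys'"
        by (auto simp: is_path_Cons)
      have "level (hd xs) = level (hd ys')" "offset (hd xs) \<le> offset (hd ys')"
        using h(1) h'(1) gap Cons.prems(3) by (auto simp: up_right_step_def level_def offset_def)
      then obtain c where "c \<in> set xs" "c \<in> set ys'"
        using Cons.IH[OF h(2) h'(2) _ Cons.prems(4) _ Cons.prems(6)] by blast
      then show ?thesis using ys by auto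
    qed
  qed
qed

subsection \<open>Last-passage times and geodesics\<close>

definition is_geodesic :: "(int \<times> int \<Rightarrow> real) \<Rightarrow> int \<times> int \<Rightarrow> int \<times> int \<Rightarrow> (int \<times> int) list \<Rightarrow> bool" where
  "is_geodesic w x y xs \<longleftrightarrow> is_path x y xs \<and> weight w xs = LPP w x y"

lemma weight_le_LPP: "is_path x y xs \<Longrightarrow> weight w xs \<le> LPP w x y"
  unfolding LPP_def setcompr_eq_image by (rule Max_ge) (auto intro: finite_paths)

lemma geodesic_exists: "ple x y \<Longrightarrow> \<exists>xs. is_geodesic w x y xs"
proof -
  assume "ple x y"
  then obtain xs where "is_path x y xs" using is_path_exists by blast
  then have "LPP w x y \<in> weight w ` {xs. is_path x y xs}"
    unfolding LPP_def setcompr_eq_image by (intro Max_in) (auto intro: finite_paths)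
  then show ?thesis by (auto simp: is_geodesic_def)
qed

lemma is_geodesic_geod: "ple x y \<Longrightarrow> is_geodesic w x y (geod w x y)"
  unfolding geod_def is_geodesic_def[symmetric] by (rule someI_ex) (rule geodesic_exists)

lemma LPP_superadditive:
  assumes "ple x c" "ple c y"
  shows "LPP w x c + LPP w c y \<le> LPP w x y"
proof -
  obtain as bs where "is_geodesic w x c as" "is_geodesic w c y bs"
    using geodesic_exists assms by blast
  then show ?thesis
    using weight_le_LPP[OF is_path_append] weight_append[OF is_path_nonempty]
    unfolding is_geodesic_def by metis
qed

lemma LPP_split_geodesic:
  assumes "is_geodesic w x y xs" "c \<in> set xs"
  shows "LPP w x y = LPP w x c + LPP w c y"
proof -
  obtain as bs where ab: "is_path x c as" "is_path c y bs" "xs = as @ tl bs"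
    using assms is_path_split unfolding is_geodesic_def by blast
  have "LPP w x y = weight w as + weight w bs"
    using assms(1) ab(3) weight_append[OF is_path_nonempty[OF ab(1)]] by (simp add: is_geodesic_def)
  also have "\<dots> \<le> LPP w x c + LPP w c y" using ab by (intro add_mono weight_le_LPP)
  finally show ?thesis
    using LPP_superadditive is_path_ple[OF ab(1)] is_path_ple[OF ab(2)] by (metis order_antisym)
qed

lemma LPP_crossing_exchange:
  assumes "is_geodesic w x y xs" "is_geodesic w u v ys" "c \<in> set xs" "c \<in> set ys"
  shows "LPP w x y + LPP w u v \<le> LPP w x v + LPP w u y"
proof -
  have "ple x c" "ple c y" "ple u c" "ple c v"
    using assms is_path_ple unfolding is_geodesic_def by blast+
  then show ?thesis
    using LPP_split_geodesic[OF assms(1,3)] LPP_split_geodesic[OF assms(2,4)]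
      LPP_superadditive[of x c v w] LPP_superadditive[of u c y w]
    by linarith
qed

subsection \<open>Exit points\<close>

lemma is_path_level_inj:
  assumes "is_path x y xs" "p \<in> set xs" "q \<in> set xs" "level p = level q"
  shows "p = q"
proof -
  obtain i i' where i: "i < length xs" "xs ! i = p" and i': "i' < length xs" "xs ! i' = q"
    using assms(2,3) by (metis in_set_conv_nth)
  have "int i = int i'"
    using is_path_level_nth[OF assms(1) i(1)] is_path_level_nth[OF assms(1) i'(1)] i(2) i'(2) assms(4)
    by simp
  with i i' show ?thesis by simp
qed

lemma is_path_meets_level:
  assumes "is_path x y xs" "level x \<le> L" "L \<le> level y"
  shows "\<exists>p\<in>set xs. level p = L"
proof -
  define i where "i = nat (L - level x)"
  have "xs \<noteq> []" using assms(1) by (rule is_path_nonempty)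
  moreover have "int i \<le> int (length xs - 1)"
    using is_path_level_last[OF assms(1)] assms(2,3) by (simp add: i_def)
  ultimately have "i < length xs" by (cases xs) auto
  moreover have "level (xs ! i) = L"
    using is_path_level_nth[OF assms(1) \<open>i < length xs\<close>] assms(2) by (simp add: i_def)
  ultimately show ?thesis using nth_mem by blast
qed

lemma Zgeo_on_geod:
  assumes "ple (pt j 0) (pt k n)" "0 \<le> m" "m \<le> n"
  shows "pt (Zgeo w j m k n) m \<in> set (geod w (pt j 0) (pt k n))"
proof -
  define g where "g = geod w (pt j 0) (pt k n)"
  have P: "is_path (pt j 0) (pt k n) g"
    using is_geodesic_geod[OF assms(1)] by (simp add: g_def is_geodesic_def)
  obtain p where p: "p \<in> set g" "level p = 2 * m"
    using is_path_meets_level[OF P, of "2 * m"] assms(2,3) by auto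
  moreover have "pt (fst p - m) m = p" using p(2) by (simp add: pt_def level_def prod_eq_iff)
  ultimately have "pt (fst p - m) m \<in> set g" by simp
  moreover have "z = z'" if "pt z m \<in> set g" "pt z' m \<in> set g" for z z'
    using is_path_level_inj[OF P that, unfolded level_pt] by (simp add: pt_def)
  ultimately have "\<exists>!z. pt z m \<in> set g" by blast
  then show ?thesis unfolding Zgeo_def g_def[symmetric] by (rule theI')
qed

lemma finite_pt_ple: "finite {i. ple (pt i m) (pt k n)}"
  by (rule finite_subset[of _ "{k + m - n .. k + n - m}"]) (auto simp: ple_def pt_def)

lemma Lrho_ge: "ple (pt i m) (pt k n) \<Longrightarrow> s i + LPP w (pt i m) (pt k n) \<le> Lrho w s m k n"
  unfolding Lrho_def setcompr_eq_image by (rule Max_ge) (auto intro: finite_pt_ple)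

lemma Zrho_maximizes:
  assumes "m \<le> n"
  shows "ple (pt (Zrho w s m k n) m) (pt k n)"
    and "Lrho w s m k n = s (Zrho w s m k n) + LPP w (pt (Zrho w s m k n) m) (pt k n)"
proof -
  let ?S = "{i. ple (pt i m) (pt k n) \<and> s i + LPP w (pt i m) (pt k n) = Lrho w s m k n}"
  have "ple (pt k m) (pt k n)" using assms by (simp add: ple_def pt_def)
  then have "Lrho w s m k n \<in> (\<lambda>i. s i + LPP w (pt i m) (pt k n)) ` {i. ple (pt i m) (pt k n)}"
    unfolding Lrho_def setcompr_eq_image by (intro Max_in) (auto intro: finite_pt_ple)
  then have "?S \<noteq> {}" by auto
  moreover have "finite ?S" by (rule finite_subset[OF _ finite_pt_ple]) auto
  ultimately have "Zrho w s m k n \<in> ?S" unfolding Zrho_def by (intro Max_in)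
  then show "ple (pt (Zrho w s m k n) m) (pt k n)"
    and "Lrho w s m k n = s (Zrho w s m k n) + LPP w (pt (Zrho w s m k n) m) (pt k n)"
    by simp_all
qed

subsection \<open>Comparison of increments\<close>

lemma Lj_Lrho_exchange:
  assumes "0 \<le> m" "m \<le> n" "ple (pt j 0) (pt a n)"
    and order: "Zgeo w j m a n \<le> Zrho w s m b n \<and> b \<le> a \<or>
                Zrho w s m b n \<le> Zgeo w j m a n \<and> a \<le> b"
  shows "Lj w j (pt a n) + Lrho w s m b n \<le> Lj w j (pt b n) + Lrho w s m a n"
proof -
  define g where "g = geod w (pt j 0) (pt a n)"
  define z where "z = Zrho w s m b n"
  have g: "is_geodesic w (pt j 0) (pt a n) g"
    using is_geodesic_geod[OF assms(3)] by (simp add: g_def)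
  obtain gs where gs: "is_path (pt (Zgeo w j m a n) m) (pt a n) gs" "set gs \<subseteq> set g"
    using is_path_suffix g Zgeo_on_geod[OF assms(3,1,2)] unfolding is_geodesic_def g_def
    by blast
  obtain p where p: "is_geodesic w (pt z m) (pt b n) p"
    using geodesic_exists Zrho_maximizes(1)[OF assms(2)] z_def by blast
  have p_path: "is_path (pt z m) (pt b n) p" using p by (simp add: is_geodesic_def)
  obtain c where "c \<in> set gs" "c \<in> set p"
    using order
  proof
    assume "Zgeo w j m a n \<le> Zrho w s m b n \<and> b \<le> a"
    then show thesis using up_right_paths_cross[OF gs(1) p_path] that by (auto simp: z_def)
  next
    assume "Zrho w s m b n \<le> Zgeo w j m a n \<and> a \<le> b"
    then show thesis using up_right_paths_cross[OF p_path gs(1)] that by (auto simp: z_def)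
  qed
  then have c: "c \<in> set g" "c \<in> set p" using gs(2) by auto
  have "ple (pt z m) c" "ple c (pt a n)"
    using is_path_ple[OF p_path] c(2) is_path_ple g c(1) unfolding is_geodesic_def by blast+
  then have "ple (pt z m) (pt a n)" by (rule ple_trans)
  then have "s z + LPP w (pt z m) (pt a n) \<le> Lrho w s m a n" by (rule Lrho_ge)
  moreover have "Lrho w s m b n = s z + LPP w (pt z m) (pt b n)"
    using Zrho_maximizes(2)[OF assms(2)] z_def by simp
  ultimately show ?thesis
    using LPP_crossing_exchange[OF g p c] unfolding Lj_def by linarith
qed

theorem lemma7:
  fixes M :: "'a measure" and \<omega> :: "int \<times> int \<Rightarrow> 'a \<Rightarrow> real" and \<zeta> :: "int \<Rightarrow> 'a \<Rightarrow> real"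
    and \<rho> :: real and n m j k l :: int
  assumes "prob_space M"
    and indep: "prob_space.indep_vars M (\<lambda>_. borel)
          (\<lambda>i. case i of Inl p \<Rightarrow> \<omega> p | Inr q \<Rightarrow> \<zeta> q)
          (Inl ` {p. fst p + snd p > 0} \<union> range Inr)"
    and omega_exp: "\<And>p. fst p + snd p > 0 \<Longrightarrow> distributed M lborel (\<omega> p) (exponential_density 1)"
    and zeta_dist: "\<And>i. distr M borel (\<zeta> i) =
          distr (density lborel (exponential_density (1 - \<rho>)) \<Otimes>\<^sub>M density lborel (exponential_density \<rho>))
                borel (\<lambda>(a, b). a - b)"
    and "n \<ge> 1" and "m = n div 2" and "0 < \<rho>" and "\<rho> < 1" and "k \<le> l"
    and "ple (pt j 0) (pt k n)" and "ple (pt j 0) (pt l n)"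
  shows "AE x in M.
     (Zgeo (\<lambda>p. \<omega> p x) j m l n \<le> Zrho (\<lambda>p. \<omega> p x) (profile (\<lambda>i. \<zeta> i x)) m k n \<longrightarrow>
        Lj (\<lambda>p. \<omega> p x) j (pt l n) - Lj (\<lambda>p. \<omega> p x) j (pt k n)
          \<le> Lrho (\<lambda>p. \<omega> p x) (profile (\<lambda>i. \<zeta> i x)) m l n - Lrho (\<lambda>p. \<omega> p x) (profile (\<lambda>i. \<zeta> i x)) m k n)
   \<and> (Zrho (\<lambda>p. \<omega> p x) (profile (\<lambda>i. \<zeta> i x)) m l n \<le> Zgeo (\<lambda>p. \<omega> p x) j m k n \<longrightarrow>
        Lrho (\<lambda>p. \<omega> p x) (profile (\<lambda>i. \<zeta> i x)) m l n - Lrho (\<lambda>p. \<omega> p x) (profile (\<lambda>i. \<zeta> i x)) m k n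
          \<le> Lj (\<lambda>p. \<omega> p x) j (pt l n) - Lj (\<lambda>p. \<omega> p x) j (pt k n))"
proof (rule AE_I2, goal_cases)
  case (1 x)
  let ?w = "\<lambda>p. \<omega> p x" and ?s = "profile (\<lambda>i. \<zeta> i x)"
  have m: "0 \<le> m" "m \<le> n" using \<open>n \<ge> 1\<close> \<open>m = n div 2\<close> by auto
  have "Lj ?w j (pt l n) + Lrho ?w ?s m k n \<le> Lj ?w j (pt k n) + Lrho ?w ?s m l n"
    if "Zgeo ?w j m l n \<le> Zrho ?w ?s m k n"
    using Lj_Lrho_exchange[OF m \<open>ple (pt j 0) (pt l n)\<close>, where b = k] that \<open>k \<le> l\<close> by blast
  moreover have "Lj ?w j (pt k n) + Lrho ?w ?s m l n \<le> Lj ?w j (pt l n) + Lrho ?w ?s m k n"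
    if "Zrho ?w ?s m l n \<le> Zgeo ?w j m k n"
    using Lj_Lrho_exchange[OF m \<open>ple (pt j 0) (pt k n)\<close>, where b = l] that \<open>k \<le> l\<close> by blast
  ultimately show ?case by linarith
qed

end
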